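(* Let $f=\frac1n\sum_{i=1}^nf_i$ with each $f_i$ differentiable, $\|\nabla f_i(x)\|\le G_i$ for all $x$, and $\nabla f_i$ $L_i$-Lipschitz. Let two proper samplings be given: an outer one with marginals $p'_i$, pair matrix $\mathbf P'$ and a vector $v'$ with $\mathbf P'-p'p'^\top\preceq\mathrm{Diag}(p'_1v'_1,\dots,p'_nv'_n)$, and an inner one with marginals $p_i$, pair matrix $\mathbf P$ and a vector $v$ with $\mathbf P-pp^\top\preceq\mathrm{Diag}(p_1v_1,\dots,p_nv_n)$. Let $Q=\sum_{i=1}^n\frac{v_iL_i^2}{p_in^2}$ and $Q'=\sum_{i=1}^n\frac{v'_iG_i^2}{p'_in^2}$. For the iterates of ProxSPIDER-AS (any stepsize $\eta>0$, any inner length $m$), for every $j\ge1$ and $1\le t\le m$, $$E\big[\|\mathcal V_t^{(j)}-\nabla f(x_t^{(j)})\|^2\big]\le Q\sum_{k=1}^tE\big[\|x_k^{(j)}-x_{k-1}^{(j)}\|^2\big]+Q'.$$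
   Context: A sampling is a random subset $S\subseteq[n]$ with marginals $\mathrm{Prob}(i\in S)>0$ and pair matrix with entries $\mathrm{Prob}(\{i,j\}\subseteq S)$; $\preceq$ is the positive semidefinite order. $r:\mathbb{R}^d\to\mathbb{R}$ has proximal mapping $\mathrm{prox}_{\eta r}(y)=\arg\min_x\{\frac1{2\eta}\|x-y\|^2+r(x)\}$ (nonempty). ProxSPIDER-AS: for $j=1,2,\dots$: $x_0^{(j)}=\tilde x^{(j)}$; draw $S^{(j)}$ from the outer sampling and set $\mathcal V_0^{(j)}=\sum_{i\in S^{(j)}}\frac1{np'_i}\nabla f_i(x_0^{(j)})$; $x_1^{(j)}=x_0^{(j)}$; for $t=1,\dots,m$: draw $S_t^{(j)}$ from the inner sampling, $\mathcal V_t^{(j)}=\sum_{i\in S_t^{(j)}}\frac1{np_i}(\nabla f_i(x_t^{(j)})-\nabla f_i(x_{t-1}^{(j)}))+\mathcal V_{t-1}^{(j)}$, $x_{t+1}^{(j)}\in\mathrm{prox}_{\eta r}(x_t^{(j)}-\eta\mathcal V_t^{(j)})$; then $\tilde x^{(j+1)}=x_{m+1}^{(j)}$. All sampled sets are drawn independently of all past randomness. *)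

theory Defs
  imports "HOL-Probability.Probability"
begin

(* Indices of the n component functions are 0..n-1 (i.e. the set {..<n}). *)

definition marg :: "nat set pmf \<Rightarrow> nat \<Rightarrow> real" where
  "marg S i = measure_pmf.prob S {A. i \<in> A}"

definition pairp :: "nat set pmf \<Rightarrow> nat \<Rightarrow> nat \<Rightarrow> real" where
  "pairp S i j = measure_pmf.prob S {A. i \<in> A \<and> j \<in> A}"

definition proper_sampling :: "nat \<Rightarrow> nat set pmf \<Rightarrow> bool" where
  "proper_sampling n S \<longleftrightarrow> (\<forall>A\<in>set_pmf S. A \<subseteq> {..<n}) \<and> (\<forall>i<n. marg S i > 0)"

(* P - p p^T \<preceq> Diag(p_1 v_1, ..., p_n v_n) in the positive semidefinite order *)
definition eso :: "nat \<Rightarrow> nat set pmf \<Rightarrow> (nat \<Rightarrow> real) \<Rightarrow> bool" where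
  "eso n S v \<longleftrightarrow> (\<forall>h :: nat \<Rightarrow> real.
     (\<Sum>i<n. \<Sum>j<n. h i * h j * (pairp S i j - marg S i * marg S j))
       \<le> (\<Sum>i<n. marg S i * v i * (h i)\<^sup>2))"

definition prox :: "real \<Rightarrow> ('a::real_normed_vector \<Rightarrow> real) \<Rightarrow> 'a \<Rightarrow> 'a set" where
  "prox \<eta> r y = {x. \<forall>z. (1 / (2 * \<eta>)) * (norm (x - y))\<^sup>2 + r x
                       \<le> (1 / (2 * \<eta>)) * (norm (z - y))\<^sup>2 + r z}"

(* State (xs, Vs): xs k = x_k, Vs k = V_k.  After "inner_run ... t",
   x_0..x_{t+1} and V_0..V_t are determined.
   g i = gradient of f_i; sel t y = the chosen element of prox at inner step t. *)
primrec inner_run :: "nat \<Rightarrow> (nat \<Rightarrow> 'a \<Rightarrow> 'a) \<Rightarrow> nat set pmf \<Rightarrow> nat set pmf \<Rightarrow> real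
    \<Rightarrow> (nat \<Rightarrow> 'a \<Rightarrow> 'a::real_vector) \<Rightarrow> 'a \<Rightarrow> nat \<Rightarrow> ((nat \<Rightarrow> 'a) \<times> (nat \<Rightarrow> 'a)) pmf" where
  "inner_run n g Sout Sin \<eta> sel x0 0 =
     map_pmf (\<lambda>S. (\<lambda>k. x0, \<lambda>k. (\<Sum>i\<in>S. (1 / (real n * marg Sout i)) *\<^sub>R g i x0))) Sout"
| "inner_run n g Sout Sin \<eta> sel x0 (Suc t) =
     bind_pmf (inner_run n g Sout Sin \<eta> sel x0 t) (\<lambda>(xs, Vs).
       map_pmf (\<lambda>S.
         let V = (\<Sum>i\<in>S. (1 / (real n * marg Sin i)) *\<^sub>R (g i (xs (Suc t)) - g i (xs t))) + Vs t
         in (xs(Suc (Suc t) := sel (Suc t) (xs (Suc t) - \<eta> *\<^sub>R V)), Vs(Suc t := V))) Sin)"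

(* Distribution of the starting point of epoch (Suc j); sel j t = selection in epoch j *)
primrec outer_start :: "nat \<Rightarrow> (nat \<Rightarrow> 'a \<Rightarrow> 'a) \<Rightarrow> nat set pmf \<Rightarrow> nat set pmf \<Rightarrow> real \<Rightarrow> nat
    \<Rightarrow> (nat \<Rightarrow> nat \<Rightarrow> 'a \<Rightarrow> 'a::real_vector) \<Rightarrow> 'a \<Rightarrow> nat \<Rightarrow> 'a pmf" where
  "outer_start n g Sout Sin \<eta> m sel x1 0 = return_pmf x1"
| "outer_start n g Sout Sin \<eta> m sel x1 (Suc j) =
     bind_pmf (outer_start n g Sout Sin \<eta> m sel x1 j)
       (\<lambda>x. map_pmf (\<lambda>(xs, Vs). xs (Suc m)) (inner_run n g Sout Sin \<eta> (sel (Suc j)) x m))"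

(* Joint distribution of the whole trajectory (x_t^{(j)}, V_t^{(j)}) of epoch j (j \<ge> 1) *)
definition epoch_traj :: "nat \<Rightarrow> (nat \<Rightarrow> 'a \<Rightarrow> 'a) \<Rightarrow> nat set pmf \<Rightarrow> nat set pmf \<Rightarrow> real \<Rightarrow> nat
    \<Rightarrow> (nat \<Rightarrow> nat \<Rightarrow> 'a \<Rightarrow> 'a::real_vector) \<Rightarrow> 'a \<Rightarrow> nat \<Rightarrow> ((nat \<Rightarrow> 'a) \<times> (nat \<Rightarrow> 'a)) pmf" where
  "epoch_traj n g Sout Sin \<eta> m sel x1 j =
     bind_pmf (outer_start n g Sout Sin \<eta> m sel x1 (j - 1))
       (\<lambda>x. inner_run n g Sout Sin \<eta> (sel j) x m)"

end

theory Submission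
  imports Defs
begin

text \<open>
  The SPIDER error \<open>V\<^sub>t - \<nabla>f(x\<^sub>t)\<close> changes in one inner step by the error of an
  importance-weighted sampled sum \<open>\<Sum>\<^sub>i\<^sub>\<in>\<^sub>S a\<^sub>i / (n p\<^sub>i)\<close> of the gradient differences
  \<open>a\<^sub>i = \<nabla>f\<^sub>i(x\<^sub>t) - \<nabla>f\<^sub>i(x\<^sub>t\<^sub>-\<^sub>1)\<close>. This sampling error has mean zero given the past,
  so squared errors add up, and the ESO inequality bounds its second moment by
  \<open>\<Sum>\<^sub>i v\<^sub>i \<parallel>a\<^sub>i\<parallel>\<^sup>2 / (p\<^sub>i n\<^sup>2) \<le> Q \<parallel>x\<^sub>t - x\<^sub>t\<^sub>-\<^sub>1\<parallel>\<^sup>2\<close>. The initial estimator is the same kind of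
  sampled sum for the outer sampling with \<open>\<parallel>a\<^sub>i\<parallel> \<le> G\<^sub>i\<close>, contributing \<open>Q'\<close>; averaging over
  the starting point of the epoch finishes the proof.
\<close>

lemma expectation_bind_pmf_finite:
  fixes f :: "'b \<Rightarrow> real"
  assumes "finite (set_pmf M)" and "\<And>x. x \<in> set_pmf M \<Longrightarrow> finite (set_pmf (N x))"
  shows "measure_pmf.expectation (bind_pmf M N) f
         = measure_pmf.expectation M (\<lambda>x. measure_pmf.expectation (N x) f)"
  by (simp add: pmf_expectation_bind[OF assms order_refl] integral_measure_pmf[OF assms(1)])

lemma finite_set_pmf_sampling: "proper_sampling n S \<Longrightarrow> finite (set_pmf S)"
  unfolding proper_sampling_def by (rule finite_subset[of _ "Pow {..<n}"]) auto

lemma expectation_centered_indicator: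
  assumes "finite (set_pmf S)"
  shows "measure_pmf.expectation S (\<lambda>T. indicator {A. i \<in> A} T - marg S i :: real) = 0"
  by (simp add: integrable_measure_pmf_finite[OF assms] marg_def)

lemma expectation_centered_indicator_product:
  assumes "finite (set_pmf S)"
  shows "measure_pmf.expectation S
           (\<lambda>T. (indicator {A. i \<in> A} T - marg S i) * (indicator {A. j \<in> A} T - marg S j) :: real)
         = pairp S i j - marg S i * marg S j"
proof -
  let ?I = "\<lambda>i T. indicator {A. i \<in> A} T :: real"
  have "?I i T * ?I j T = indicator {A. i \<in> A \<and> j \<in> A} T" for T
    by (simp add: indicator_def)
  then have "(?I i T - marg S i) * (?I j T - marg S j)
      = indicator {A. i \<in> A \<and> j \<in> A} T - marg S j * ?I i T - marg S i * ?I j T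
        + marg S i * marg S j" for T
    by (simp add: algebra_simps)
  then show ?thesis
    by (simp add: integrable_measure_pmf_finite[OF assms] marg_def pairp_def)
qed

lemma eso_nonneg:
  assumes "proper_sampling n S" and "eso n S v" and "i < n"
  shows "0 \<le> v i"
proof -
  have "pairp S i i - marg S i * marg S i
      = (\<Sum>k<n. \<Sum>j<n. of_bool (k = i) * of_bool (j = i) * (pairp S k j - marg S k * marg S j))"
    using assms(3) by (simp add: mult.assoc flip: sum_distrib_left)
  also have "\<dots> \<le> (\<Sum>k<n. marg S k * v k * (of_bool (k = i))\<^sup>2)"
    using assms(2) unfolding eso_def by (rule spec)
  also have "\<dots> = marg S i * v i"
    using assms(3) by (simp add: power2_eq_square flip: of_bool_conj)
  finally have "pairp S i i - marg S i * marg S i \<le> marg S i * v i" .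
  moreover have "pairp S i i = marg S i" unfolding pairp_def marg_def by simp
  ultimately have "marg S i * (1 - marg S i) \<le> marg S i * v i" by (simp add: algebra_simps)
  moreover have "0 < marg S i" using assms(1,3) unfolding proper_sampling_def by auto
  ultimately have "1 - marg S i \<le> v i" by simp
  moreover have "marg S i \<le> 1" unfolding marg_def by simp
  ultimately show ?thesis by linarith
qed

lemma eso_euclidean:
  fixes b :: "nat \<Rightarrow> 'a::euclidean_space"
  assumes "eso n S v"
  shows "(\<Sum>i<n. \<Sum>j<n. (pairp S i j - marg S i * marg S j) * (b i \<bullet> b j))
         \<le> (\<Sum>i<n. marg S i * v i * (norm (b i))\<^sup>2)"
proof -
  define c where "c i j = pairp S i j - marg S i * marg S j" for i j
  have "(\<Sum>i<n. \<Sum>j<n. c i j * (b i \<bullet> b j))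
      = (\<Sum>i<n. \<Sum>j<n. \<Sum>e\<in>Basis. (b i \<bullet> e) * (b j \<bullet> e) * c i j)"
    by (simp add: euclidean_inner[of "b _" "b _"] sum_distrib_left mult.commute)
  also have "\<dots> = (\<Sum>e\<in>Basis. \<Sum>i<n. \<Sum>j<n. (b i \<bullet> e) * (b j \<bullet> e) * c i j)"
    by (simp only: sum.swap[where B = Basis])
  also have "\<dots> \<le> (\<Sum>e\<in>Basis. \<Sum>i<n. marg S i * v i * (b i \<bullet> e)\<^sup>2)"
    by (rule sum_mono) (use assms in \<open>simp add: eso_def c_def\<close>)
  also have "\<dots> = (\<Sum>i<n. \<Sum>e\<in>Basis. marg S i * v i * (b i \<bullet> e)\<^sup>2)"
    by (rule sum.swap)
  also have "\<dots> = (\<Sum>i<n. marg S i * v i * (norm (b i))\<^sup>2)"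
  proof -
    have "(norm x)\<^sup>2 = (\<Sum>e\<in>Basis. (x \<bullet> e)\<^sup>2)" for x :: 'a
      unfolding power2_norm_eq_inner by (subst euclidean_inner) (simp add: power2_eq_square)
    then show ?thesis by (simp add: sum_distrib_left)
  qed
  finally show ?thesis by (simp add: c_def)
qed

definition variance_bound :: "nat \<Rightarrow> nat set pmf \<Rightarrow> (nat \<Rightarrow> real) \<Rightarrow> (nat \<Rightarrow> real) \<Rightarrow> real" where
  "variance_bound n S v c = (\<Sum>i<n. v i * (c i)\<^sup>2 / (marg S i * (real n)\<^sup>2))"

lemma variance_bound_mono:
  assumes "proper_sampling n S" and "eso n S v" and "\<And>i. i < n \<Longrightarrow> \<bar>c i\<bar> \<le> d i"
  shows "variance_bound n S v c \<le> variance_bound n S v d"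
  unfolding variance_bound_def
proof (rule sum_mono)
  fix i assume "i \<in> {..<n}"
  then have "i < n" by simp
  then have "(c i)\<^sup>2 \<le> (d i)\<^sup>2"
    using power_mono[of "\<bar>c i\<bar>" "d i" 2] assms(3) by simp
  moreover have "0 \<le> v i" using eso_nonneg[OF assms(1,2) \<open>i < n\<close>] .
  ultimately show "v i * (c i)\<^sup>2 / (marg S i * (real n)\<^sup>2) \<le> v i * (d i)\<^sup>2 / (marg S i * (real n)\<^sup>2)"
    by (intro divide_right_mono mult_left_mono) (simp_all add: marg_def)
qed

lemma expectation_centered_sampling_sq_norm:
  fixes A :: "'a::real_inner" and b :: "nat \<Rightarrow> 'a"
  assumes "finite (set_pmf S)"
  shows "measure_pmf.expectation S
           (\<lambda>T. (norm (A + (\<Sum>i<n. (indicator {B. i \<in> B} T - marg S i) *\<^sub>R b i)))\<^sup>2)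
         = (norm A)\<^sup>2 + (\<Sum>i<n. \<Sum>j<n. (pairp S i j - marg S i * marg S j) * (b i \<bullet> b j))"
proof -
  let ?c = "\<lambda>i T. indicator {B. i \<in> B} T - marg S i :: real"
  have "(norm (A + (\<Sum>i<n. ?c i T *\<^sub>R b i)))\<^sup>2
      = (norm A)\<^sup>2 + 2 * (\<Sum>i<n. ?c i T * (A \<bullet> b i))
        + (\<Sum>i<n. \<Sum>j<n. ?c i T * ?c j T * (b i \<bullet> b j))" for T
    unfolding power2_norm_eq_inner
    by (simp add: inner_add_left inner_add_right inner_sum_left inner_sum_right
        sum_distrib_left inner_commute algebra_simps)
  then show ?thesis
    by (simp add: integrable_measure_pmf_finite[OF assms] expectation_centered_indicator[OF assms]
        expectation_centered_indicator_product[OF assms])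
qed

lemma expectation_sampled_estimator_sq_error:
  fixes a :: "nat \<Rightarrow> 'a::euclidean_space" and A :: 'a
  assumes "proper_sampling n S" and "eso n S v"
  shows "measure_pmf.expectation S
           (\<lambda>T. (norm (A + (\<Sum>i\<in>T. (1 / (real n * marg S i)) *\<^sub>R a i)
                         - (1 / real n) *\<^sub>R (\<Sum>i<n. a i)))\<^sup>2)
         \<le> (norm A)\<^sup>2 + variance_bound n S v (\<lambda>i. norm (a i))"
proof -
  define b where "b i = (1 / (real n * marg S i)) *\<^sub>R a i" for i
  have pos: "0 < marg S i" if "i < n" for i
    using assms(1) that unfolding proper_sampling_def by auto
  have centered: "A + (\<Sum>i\<in>T. b i) - (1 / real n) *\<^sub>R (\<Sum>i<n. a i)
      = A + (\<Sum>i<n. (indicator {B. i \<in> B} T - marg S i) *\<^sub>R b i)"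
    if "T \<in> set_pmf S" for T
  proof -
    have "T \<subseteq> {..<n}" using assms(1) that unfolding proper_sampling_def by auto
    then have "(\<Sum>i\<in>T. b i) = (\<Sum>i<n. indicator {B. i \<in> B} T *\<^sub>R b i)"
      by (auto intro: sum.cong)
    moreover have "(1 / real n) *\<^sub>R (\<Sum>i<n. a i) = (\<Sum>i<n. marg S i *\<^sub>R b i)"
      by (auto simp: b_def scaleR_sum_right dest: pos intro!: sum.cong)
    ultimately show ?thesis by (simp add: scaleR_diff_left sum_subtractf)
  qed
  have "measure_pmf.expectation S
          (\<lambda>T. (norm (A + (\<Sum>i\<in>T. b i) - (1 / real n) *\<^sub>R (\<Sum>i<n. a i)))\<^sup>2)
      = measure_pmf.expectation S
          (\<lambda>T. (norm (A + (\<Sum>i<n. (indicator {B. i \<in> B} T - marg S i) *\<^sub>R b i)))\<^sup>2)"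
    by (intro integral_cong_AE) (auto intro!: AE_pmfI simp: centered)
  also have "\<dots> = (norm A)\<^sup>2 + (\<Sum>i<n. \<Sum>j<n. (pairp S i j - marg S i * marg S j) * (b i \<bullet> b j))"
    by (rule expectation_centered_sampling_sq_norm[OF finite_set_pmf_sampling[OF assms(1)]])
  also have "\<dots> \<le> (norm A)\<^sup>2 + (\<Sum>i<n. marg S i * v i * (norm (b i))\<^sup>2)"
    using eso_euclidean[OF assms(2)] by simp
  also have "(\<Sum>i<n. marg S i * v i * (norm (b i))\<^sup>2) = variance_bound n S v (\<lambda>i. norm (a i))"
    unfolding variance_bound_def
    by (intro sum.cong) (auto simp: b_def power2_eq_square field_simps dest: pos)
  finally show ?thesis by (simp add: b_def)
qed

definition spider_step :: "nat \<Rightarrow> (nat \<Rightarrow> 'a \<Rightarrow> 'a::real_vector) \<Rightarrow> nat set pmf \<Rightarrow> real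
    \<Rightarrow> (nat \<Rightarrow> 'a \<Rightarrow> 'a) \<Rightarrow> nat \<Rightarrow> (nat \<Rightarrow> 'a) \<times> (nat \<Rightarrow> 'a) \<Rightarrow> ((nat \<Rightarrow> 'a) \<times> (nat \<Rightarrow> 'a)) pmf" where
  "spider_step n g Sin \<eta> sel t = (\<lambda>(xs, Vs).
     map_pmf (\<lambda>S.
       let V = (\<Sum>i\<in>S. (1 / (real n * marg Sin i)) *\<^sub>R (g i (xs (Suc t)) - g i (xs t))) + Vs t
       in (xs(Suc (Suc t) := sel (Suc t) (xs (Suc t) - \<eta> *\<^sub>R V)), Vs(Suc t := V))) Sin)"

lemma inner_run_Suc:
  "inner_run n g Sout Sin \<eta> sel x0 (Suc t)
   = bind_pmf (inner_run n g Sout Sin \<eta> sel x0 t) (spider_step n g Sin \<eta> sel t)"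
  unfolding spider_step_def by (rule inner_run.simps(2))

lemma finite_set_pmf_inner_run:
  assumes "proper_sampling n Sout" and "proper_sampling n Sin"
  shows "finite (set_pmf (inner_run n g Sout Sin \<eta> sel x0 t))"
  by (induction t) (auto simp: inner_run_Suc spider_step_def finite_set_pmf_sampling[OF assms(1)]
      finite_set_pmf_sampling[OF assms(2)] split: prod.splits)

lemma finite_set_pmf_outer_start:
  assumes "proper_sampling n Sout" and "proper_sampling n Sin"
  shows "finite (set_pmf (outer_start n g Sout Sin \<eta> m sel x1 j))"
  by (induction j) (auto simp: finite_set_pmf_inner_run[OF assms])

definition traj_prefix :: "nat \<Rightarrow> (nat \<Rightarrow> 'a::zero) \<times> (nat \<Rightarrow> 'a) \<Rightarrow> (nat \<Rightarrow> 'a) \<times> (nat \<Rightarrow> 'a)" where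
  "traj_prefix s = (\<lambda>(xs, Vs). (\<lambda>k. if k \<le> Suc s then xs k else 0, \<lambda>k. if k \<le> s then Vs k else 0))"

lemma map_traj_prefix_spider_step:
  assumes "s \<le> t"
  shows "map_pmf (traj_prefix s) (spider_step n g Sin \<eta> sel t st) = return_pmf (traj_prefix s st)"
proof -
  obtain xs Vs where st: "st = (xs, Vs)" by (cases st)
  have "traj_prefix s (xs(Suc (Suc t) := y), Vs(Suc t := V)) = traj_prefix s (xs, Vs)" for y V
    using assms by (auto simp: traj_prefix_def fun_eq_iff)
  then show ?thesis by (simp add: st spider_step_def map_pmf_comp Let_def)
qed

lemma map_traj_prefix_inner_run:
  assumes "s \<le> t"
  shows "map_pmf (traj_prefix s) (inner_run n g Sout Sin \<eta> sel x0 t)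
       = map_pmf (traj_prefix s) (inner_run n g Sout Sin \<eta> sel x0 s)"
  using assms
proof (induction t rule: dec_induct)
  case (step k)
  have "map_pmf (traj_prefix s) (inner_run n g Sout Sin \<eta> sel x0 (Suc k))
      = bind_pmf (inner_run n g Sout Sin \<eta> sel x0 k) (\<lambda>st. return_pmf (traj_prefix s st))"
    using step.hyps by (simp only: inner_run_Suc map_bind_pmf map_traj_prefix_spider_step)
  also have "\<dots> = map_pmf (traj_prefix s) (inner_run n g Sout Sin \<eta> sel x0 s)"
    using step.IH by (simp add: map_pmf_def)
  finally show ?case .
qed simp

lemma expectation_inner_run_prefix:
  fixes F :: "(nat \<Rightarrow> 'a::real_vector) \<times> (nat \<Rightarrow> 'a) \<Rightarrow> real"
  assumes "s \<le> t" and "\<And>st. F (traj_prefix s st) = F st"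
  shows "measure_pmf.expectation (inner_run n g Sout Sin \<eta> sel x0 t) F
       = measure_pmf.expectation (inner_run n g Sout Sin \<eta> sel x0 s) F"
  using arg_cong[OF map_traj_prefix_inner_run[OF assms(1)], of "\<lambda>M. measure_pmf.expectation M F"]
  by (simp add: assms(2))

definition estimator_sq_error :: "nat \<Rightarrow> (nat \<Rightarrow> 'a \<Rightarrow> 'a::real_normed_vector) \<Rightarrow> nat
    \<Rightarrow> (nat \<Rightarrow> 'a) \<times> (nat \<Rightarrow> 'a) \<Rightarrow> real" where
  "estimator_sq_error n g t = (\<lambda>(xs, Vs). (norm (Vs t - (1 / real n) *\<^sub>R (\<Sum>i<n. g i (xs t))))\<^sup>2)"

definition step_sq_length :: "nat \<Rightarrow> (nat \<Rightarrow> 'a::real_normed_vector) \<times> (nat \<Rightarrow> 'a) \<Rightarrow> real" where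
  "step_sq_length k = (\<lambda>(xs, Vs). (norm (xs k - xs (k - 1)))\<^sup>2)"

lemma estimator_sq_error_traj_prefix [simp]:
  "t \<le> s \<Longrightarrow> estimator_sq_error n g t (traj_prefix s st) = estimator_sq_error n g t st"
  by (cases st) (simp add: estimator_sq_error_def traj_prefix_def)

lemma step_sq_length_traj_prefix [simp]:
  "k \<le> Suc s \<Longrightarrow> step_sq_length k (traj_prefix s st) = step_sq_length k st"
  by (cases st) (auto simp: step_sq_length_def traj_prefix_def)

lemma expectation_spider_step_sq_error:
  fixes g :: "nat \<Rightarrow> 'a::euclidean_space \<Rightarrow> 'a"
  assumes "proper_sampling n Sin" and "eso n Sin v"
    and lipschitz: "\<And>i x y. i < n \<Longrightarrow> norm (g i x - g i y) \<le> L i * norm (x - y)"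
  shows "measure_pmf.expectation (spider_step n g Sin \<eta> sel t st) (estimator_sq_error n g (Suc t))
         \<le> estimator_sq_error n g t st + variance_bound n Sin v L * step_sq_length (Suc t) st"
proof -
  obtain xs Vs where st: "st = (xs, Vs)" by (cases st)
  define A where "A = Vs t - (1 / real n) *\<^sub>R (\<Sum>i<n. g i (xs t))"
  define a where "a i = g i (xs (Suc t)) - g i (xs t)" for i
  define \<delta> where "\<delta> = norm (xs (Suc t) - xs t)"
  have "measure_pmf.expectation (spider_step n g Sin \<eta> sel t st) (estimator_sq_error n g (Suc t))
      = measure_pmf.expectation Sin
          (\<lambda>T. (norm (A + (\<Sum>i\<in>T. (1 / (real n * marg Sin i)) *\<^sub>R a i)
                        - (1 / real n) *\<^sub>R (\<Sum>i<n. a i)))\<^sup>2)"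
    by (simp add: st spider_step_def estimator_sq_error_def A_def a_def Let_def
        sum_subtractf scaleR_diff_right algebra_simps)
  also have "\<dots> \<le> (norm A)\<^sup>2 + variance_bound n Sin v (\<lambda>i. norm (a i))"
    by (rule expectation_sampled_estimator_sq_error[OF assms(1,2)])
  also have "variance_bound n Sin v (\<lambda>i. norm (a i)) \<le> variance_bound n Sin v (\<lambda>i. L i * \<delta>)"
    by (rule variance_bound_mono[OF assms(1,2)]) (simp add: a_def \<delta>_def lipschitz)
  also have "variance_bound n Sin v (\<lambda>i. L i * \<delta>) = variance_bound n Sin v L * \<delta>\<^sup>2"
    by (simp add: variance_bound_def sum_distrib_right power_mult_distrib mult.assoc)
  finally show ?thesis
    by (simp add: st estimator_sq_error_def step_sq_length_def A_def \<delta>_def)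
qed

lemma expectation_inner_run_sq_error_Suc:
  fixes g :: "nat \<Rightarrow> 'a::euclidean_space \<Rightarrow> 'a"
  assumes "proper_sampling n Sout" and "proper_sampling n Sin" and "eso n Sin v"
    and "\<And>i x y. i < n \<Longrightarrow> norm (g i x - g i y) \<le> L i * norm (x - y)"
  shows "measure_pmf.expectation (inner_run n g Sout Sin \<eta> sel x0 (Suc t)) (estimator_sq_error n g (Suc t))
         \<le> measure_pmf.expectation (inner_run n g Sout Sin \<eta> sel x0 t) (estimator_sq_error n g t)
           + variance_bound n Sin v L
             * measure_pmf.expectation (inner_run n g Sout Sin \<eta> sel x0 t) (step_sq_length (Suc t))"
proof -
  let ?D = "inner_run n g Sout Sin \<eta> sel x0 t"
  have fin: "finite (set_pmf ?D)" by (rule finite_set_pmf_inner_run[OF assms(1,2)])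
  have "measure_pmf.expectation (inner_run n g Sout Sin \<eta> sel x0 (Suc t)) (estimator_sq_error n g (Suc t))
      = measure_pmf.expectation ?D
          (\<lambda>st. measure_pmf.expectation (spider_step n g Sin \<eta> sel t st) (estimator_sq_error n g (Suc t)))"
    unfolding inner_run_Suc
    by (rule expectation_bind_pmf_finite[OF fin])
       (auto simp: spider_step_def finite_set_pmf_sampling[OF assms(2)] split: prod.splits)
  also have "\<dots> \<le> measure_pmf.expectation ?D
          (\<lambda>st. estimator_sq_error n g t st + variance_bound n Sin v L * step_sq_length (Suc t) st)"
    by (intro integral_mono integrable_measure_pmf_finite[OF fin]
        expectation_spider_step_sq_error[OF assms(2-4)])
  finally show ?thesis
    by (simp add: integrable_measure_pmf_finite[OF fin])
qed

lemma expectation_inner_run_sq_error_0: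
  fixes g :: "nat \<Rightarrow> 'a::euclidean_space \<Rightarrow> 'a"
  assumes "proper_sampling n Sout" and "eso n Sout v'"
    and "\<And>i x. i < n \<Longrightarrow> norm (g i x) \<le> G i"
  shows "measure_pmf.expectation (inner_run n g Sout Sin \<eta> sel x0 0) (estimator_sq_error n g 0)
         \<le> variance_bound n Sout v' G"
proof -
  have "measure_pmf.expectation (inner_run n g Sout Sin \<eta> sel x0 0) (estimator_sq_error n g 0)
      = measure_pmf.expectation Sout
          (\<lambda>T. (norm (0 + (\<Sum>i\<in>T. (1 / (real n * marg Sout i)) *\<^sub>R g i x0)
                        - (1 / real n) *\<^sub>R (\<Sum>i<n. g i x0)))\<^sup>2)"
    by (simp add: estimator_sq_error_def)
  also have "\<dots> \<le> (norm (0::'a))\<^sup>2 + variance_bound n Sout v' (\<lambda>i. norm (g i x0))"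
    by (rule expectation_sampled_estimator_sq_error[OF assms(1,2)])
  also have "\<dots> \<le> variance_bound n Sout v' G"
    using variance_bound_mono[OF assms(1,2)] assms(3) by simp
  finally show ?thesis .
qed

lemma expectation_inner_run_sq_error:
  fixes g :: "nat \<Rightarrow> 'a::euclidean_space \<Rightarrow> 'a"
  assumes "proper_sampling n Sout" and "eso n Sout v'"
    and "proper_sampling n Sin" and "eso n Sin v"
    and "\<And>i x. i < n \<Longrightarrow> norm (g i x) \<le> G i"
    and "\<And>i x y. i < n \<Longrightarrow> norm (g i x - g i y) \<le> L i * norm (x - y)"
    and "t \<le> m"
  shows "measure_pmf.expectation (inner_run n g Sout Sin \<eta> sel x0 m) (estimator_sq_error n g t)
         \<le> variance_bound n Sin v L
             * (\<Sum>k = 1..t. measure_pmf.expectation (inner_run n g Sout Sin \<eta> sel x0 m) (step_sq_length k))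
           + variance_bound n Sout v' G"
  using \<open>t \<le> m\<close>
proof (induction t)
  case 0
  have "measure_pmf.expectation (inner_run n g Sout Sin \<eta> sel x0 m) (estimator_sq_error n g 0)
      = measure_pmf.expectation (inner_run n g Sout Sin \<eta> sel x0 0) (estimator_sq_error n g 0)"
    by (rule expectation_inner_run_prefix) simp_all
  also have "\<dots> \<le> variance_bound n Sout v' G"
    by (rule expectation_inner_run_sq_error_0[OF assms(1,2,5)])
  finally show ?case by simp
next
  case (Suc t)
  let ?E = "\<lambda>s F. measure_pmf.expectation (inner_run n g Sout Sin \<eta> sel x0 s) F"
  have "?E m (estimator_sq_error n g (Suc t)) = ?E (Suc t) (estimator_sq_error n g (Suc t))"
    using Suc.prems by (intro expectation_inner_run_prefix) simp_all
  also have "\<dots> \<le> ?E t (estimator_sq_error n g t)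
      + variance_bound n Sin v L * ?E t (step_sq_length (Suc t))"
    by (rule expectation_inner_run_sq_error_Suc[OF assms(1,3,4,6)])
  also have "?E t (estimator_sq_error n g t) = ?E m (estimator_sq_error n g t)"
    using Suc.prems by (intro expectation_inner_run_prefix[symmetric]) simp_all
  also have "?E t (step_sq_length (Suc t)) = ?E m (step_sq_length (Suc t))"
    using Suc.prems by (intro expectation_inner_run_prefix[symmetric]) simp_all
  finally show ?case
    using Suc.IH Suc.prems by (simp add: algebra_simps)
qed

theorem lemma6p1:
  fixes n m :: nat and d_f :: "nat \<Rightarrow> 'a::euclidean_space \<Rightarrow> real"
    and g :: "nat \<Rightarrow> 'a \<Rightarrow> 'a" and G L :: "nat \<Rightarrow> real"
    and Sout Sin :: "nat set pmf" and v v' :: "nat \<Rightarrow> real"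
    and r :: "'a \<Rightarrow> real" and \<eta> :: real
    and sel :: "nat \<Rightarrow> nat \<Rightarrow> 'a \<Rightarrow> 'a" and x1 :: 'a
    and j t :: nat
  assumes n_pos: "0 < n"
    and grad: "\<And>i x. i < n \<Longrightarrow> (d_f i has_derivative (\<lambda>h. g i x \<bullet> h)) (at x)"
    and bounded: "\<And>i x. i < n \<Longrightarrow> norm (g i x) \<le> G i"
    and lipschitz: "\<And>i x y. i < n \<Longrightarrow> norm (g i x - g i y) \<le> L i * norm (x - y)"
    and outer_proper: "proper_sampling n Sout" and outer_eso: "eso n Sout v'"
    and inner_proper: "proper_sampling n Sin" and inner_eso: "eso n Sin v"
    and eta_pos: "0 < \<eta>"
    and sel_prox: "\<And>j t y. sel j t y \<in> prox \<eta> r y"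
    and j: "1 \<le> j" and t: "1 \<le> t" "t \<le> m"
  shows "(let D = epoch_traj n g Sout Sin \<eta> m sel x1 j;
              Q = (\<Sum>i<n. v i * (L i)\<^sup>2 / (marg Sin i * (real n)\<^sup>2));
              Q' = (\<Sum>i<n. v' i * (G i)\<^sup>2 / (marg Sout i * (real n)\<^sup>2))
          in measure_pmf.expectation D
               (\<lambda>(xs, Vs). (norm (Vs t - (1 / real n) *\<^sub>R (\<Sum>i<n. g i (xs t))))\<^sup>2)
             \<le> Q * (\<Sum>k = 1..t. measure_pmf.expectation D (\<lambda>(xs, Vs). (norm (xs k - xs (k - 1)))\<^sup>2))
               + Q')"
proof -
  let ?E = "measure_pmf.expectation"
  define M where "M = outer_start n g Sout Sin \<eta> m sel x1 (j - 1)"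
  define D where "D x = inner_run n g Sout Sin \<eta> (sel j) x m" for x
  have traj: "epoch_traj n g Sout Sin \<eta> m sel x1 j = bind_pmf M D"
    unfolding epoch_traj_def M_def D_def ..
  have fin_M: "finite (set_pmf M)"
    unfolding M_def by (rule finite_set_pmf_outer_start[OF outer_proper inner_proper])
  have fin_D: "finite (set_pmf (D x))" for x
    unfolding D_def by (rule finite_set_pmf_inner_run[OF outer_proper inner_proper])
  have E_bind: "?E (bind_pmf M D) F = ?E M (\<lambda>x. ?E (D x) F)" for F :: "_ \<Rightarrow> real"
    by (rule expectation_bind_pmf_finite[OF fin_M fin_D])
  have "?E (bind_pmf M D) (estimator_sq_error n g t)
      \<le> ?E M (\<lambda>x. variance_bound n Sin v L * (\<Sum>k = 1..t. ?E (D x) (step_sq_length k))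
                   + variance_bound n Sout v' G)"
    unfolding E_bind D_def
    by (intro integral_mono integrable_measure_pmf_finite[OF fin_M] expectation_inner_run_sq_error
        outer_proper outer_eso inner_proper inner_eso bounded lipschitz t(2))
  also have "\<dots> = variance_bound n Sin v L * (\<Sum>k = 1..t. ?E (bind_pmf M D) (step_sq_length k))
                   + variance_bound n Sout v' G"
    by (simp add: E_bind integrable_measure_pmf_finite[OF fin_M])
  finally show ?thesis
    unfolding Let_def traj variance_bound_def estimator_sq_error_def step_sq_length_def .
qed

end
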